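(* Let $P,Q$ be finite posets and $p:Q\to P$ a quotient map, and let $\hat p:\mathcal{O}(Q)\to\mathcal{O}(P)$ be the map induced by $p$. Then $\hat p$ is a quotient map of posets (with respect to inclusion), it preserves unions ($\hat p(X\cup Y)=\hat p(X)\cup\hat p(Y)$), it maps join-irreducible elements (nonempty principal down-sets) to join-irreducible elements, and $\hat p(\downarrow x)=\downarrow p(x)$ for all $x\in Q$, i.e. $\hat p\circ\psi=\varphi\circ p$ where $\psi:Q\to\mathcal{O}(Q)$, $\varphi:P\to\mathcal{O}(P)$ are $x\mapsto\downarrow x$.
   Context: For a poset $P$, $\downarrow x=\{m\in P:m\le x\}$; a down-set is $D\subseteq P$ with $q\in D$, $m\le q\Rightarrow m\in D$; $\mathcal{O}(P)$ is the set of all down-sets of $P$ ordered by inclusion (a lattice with $\cup,\cap$). A quotient map between posets is a surjective order-preserving map $\phi:A\to B$ such that for all $a\le b$ in $B$ there are $x\le y$ in $A$ with $\phi(x)=a,\phi(y)=b$. Induced map: for a quotient map $p:Q\to P$ of finite posets, $\hat p(\emptyset)=\emptyset$ and, for a nonempty down-set $A\subseteq Q$ with maximal elements $a_1,\dots,a_k$ (so $A=\bigcup_i\downarrow a_i$), $\hat p(A)=\bigcup_{i=1}^k\downarrow p(a_i)$. *)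

theory Defs
  imports Main
begin

text \<open>Finite posets are modelled as types of class finite and order.\<close>

definition principal_down :: "'a::order \<Rightarrow> 'a set" where
  "principal_down x = {m. m \<le> x}"

definition is_down_set :: "'a::order set \<Rightarrow> bool" where
  "is_down_set D \<longleftrightarrow> (\<forall>q\<in>D. \<forall>m. m \<le> q \<longrightarrow> m \<in> D)"

definition down_sets :: "'a::order set set" where
  "down_sets = {D. is_down_set D}"

definition quotient_map_on ::
  "'a set \<Rightarrow> ('a \<Rightarrow> 'a \<Rightarrow> bool) \<Rightarrow> 'b set \<Rightarrow> ('b \<Rightarrow> 'b \<Rightarrow> bool) \<Rightarrow> ('a \<Rightarrow> 'b) \<Rightarrow> bool" where
  "quotient_map_on A leA B leB f \<longleftrightarrow>
     f ` A = B \<and>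
     (\<forall>x\<in>A. \<forall>y\<in>A. leA x y \<longrightarrow> leB (f x) (f y)) \<and>
     (\<forall>a\<in>B. \<forall>b\<in>B. leB a b \<longrightarrow> (\<exists>x\<in>A. \<exists>y\<in>A. leA x y \<and> f x = a \<and> f y = b))"

definition maximal_elems :: "'a::order set \<Rightarrow> 'a set" where
  "maximal_elems A = {a\<in>A. \<forall>b\<in>A. a \<le> b \<longrightarrow> b = a}"

definition induced_map :: "('q::order \<Rightarrow> 'p::order) \<Rightarrow> 'q set \<Rightarrow> 'p set" where
  "induced_map p A = (\<Union>a\<in>maximal_elems A. principal_down (p a))"

definition join_irreducible_down :: "'a::order set \<Rightarrow> bool" where
  "join_irreducible_down D \<longleftrightarrow> D \<in> down_sets \<and> D \<noteq> {} \<and>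
     (\<forall>X\<in>down_sets. \<forall>Y\<in>down_sets. D = X \<union> Y \<longrightarrow> D = X \<or> D = Y)"

end

theory Submission
  imports Defs
begin

text \<open>For monotone \<open>p\<close> on a finite poset, \<open>\<hat>p(A)\<close> is simply the down-closure of \<open>p(A)\<close>, since
  every element of \<open>A\<close> lies below a maximal one. All four claims follow from this description:
  surjectivity and the lifting of inclusions come from taking preimages \<open>p\<^sup>-\<^sup>1(D)\<close>, which are
  down-sets with \<open>\<hat>p(p\<^sup>-\<^sup>1(D)) = D\<close> because \<open>p\<close> is onto; join-irreducible down-sets of a finite
  poset are exactly the nonempty principal ones, and \<open>\<hat>p\<close> maps \<open>\<down>x\<close> to \<open>\<down>p(x)\<close>.\<close>

lemma is_down_set_principal_down: "is_down_set (principal_down x)"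
  by (auto simp: is_down_set_def principal_down_def dest: order_trans)

lemma is_down_set_vimage:
  assumes "mono p" and "is_down_set D"
  shows "is_down_set (p -` D)"
  using assms by (auto simp: is_down_set_def dest: monoD)

lemma induced_map_eq_down_closure:
  fixes p :: "'q::{finite,order} \<Rightarrow> 'p::order"
  assumes "mono p"
  shows "induced_map p A = {y. \<exists>a\<in>A. y \<le> p a}"
proof
  show "induced_map p A \<subseteq> {y. \<exists>a\<in>A. y \<le> p a}"
    by (auto simp: induced_map_def maximal_elems_def principal_down_def)
next
  show "{y. \<exists>a\<in>A. y \<le> p a} \<subseteq> induced_map p A"
  proof
    fix y assume "y \<in> {y. \<exists>a\<in>A. y \<le> p a}"
    then obtain a where a: "a \<in> A" "y \<le> p a" by auto
    obtain m where m: "m \<in> A" "a \<le> m" "\<forall>b\<in>A. m \<le> b \<longrightarrow> m = b"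
      using finite_has_maximal2[OF finite[of A] a(1)] by auto
    have "m \<in> maximal_elems A" using m by (auto simp: maximal_elems_def)
    moreover have "y \<le> p m" using a(2) monoD[OF assms m(2)] by (rule order_trans)
    ultimately show "y \<in> induced_map p A"
      by (auto simp: induced_map_def principal_down_def)
  qed
qed

context
  fixes p :: "'q::{finite,order} \<Rightarrow> 'p::order"
  assumes mono_p: "mono p"
begin

lemmas induced_map_eq = induced_map_eq_down_closure[OF mono_p]

lemma is_down_set_induced_map: "is_down_set (induced_map p A)"
  by (auto simp: induced_map_eq is_down_set_def dest: order_trans)

lemma induced_map_mono: "A \<subseteq> B \<Longrightarrow> induced_map p A \<subseteq> induced_map p B"
  by (auto simp: induced_map_eq)

lemma induced_map_Un: "induced_map p (A \<union> B) = induced_map p A \<union> induced_map p B"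
  by (auto simp: induced_map_eq)

lemma induced_map_principal_down: "induced_map p (principal_down x) = principal_down (p x)"
  by (auto simp: induced_map_eq principal_down_def dest: monoD[OF mono_p] intro: order_trans)

lemma induced_map_vimage:
  assumes "surj p" and "is_down_set D"
  shows "induced_map p (p -` D) = D"
proof
  show "induced_map p (p -` D) \<subseteq> D"
    using assms(2) by (auto simp: induced_map_eq is_down_set_def)
  show "D \<subseteq> induced_map p (p -` D)"
  proof
    fix y assume "y \<in> D"
    moreover obtain a where "y = p a" using assms(1) by (metis surjD)
    ultimately show "y \<in> induced_map p (p -` D)" by (auto simp: induced_map_eq)
  qed
qed

lemma quotient_map_on_induced_map:
  assumes "surj p"
  shows "quotient_map_on down_sets (\<subseteq>) down_sets (\<subseteq>) (induced_map p)"
proof -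
  have lift: "D = induced_map p (p -` D) \<and> p -` D \<in> down_sets" if "D \<in> down_sets" for D
    using that induced_map_vimage[OF assms] is_down_set_vimage[OF mono_p]
    by (simp add: down_sets_def)
  have "induced_map p ` down_sets = down_sets"
    using lift is_down_set_induced_map by (force simp: down_sets_def)
  moreover have "\<exists>X\<in>down_sets. \<exists>Y\<in>down_sets. X \<subseteq> Y \<and> induced_map p X = D \<and> induced_map p Y = E"
    if "D \<in> down_sets" "E \<in> down_sets" "D \<subseteq> E" for D E
    using that lift by (intro bexI[of _ "p -` D"] bexI[of _ "p -` E"]) auto
  ultimately show ?thesis
    by (auto simp: quotient_map_on_def induced_map_mono)
qed

end

lemma join_irreducible_down_principal_down: "join_irreducible_down (principal_down x)"
  unfolding join_irreducible_down_def
proof (intro conjI ballI impI)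
  show "principal_down x \<in> down_sets"
    by (simp add: down_sets_def is_down_set_principal_down)
  show "principal_down x \<noteq> {}" by (auto simp: principal_down_def)
next
  fix X Y assume XY: "X \<in> down_sets" "Y \<in> down_sets" and eq: "principal_down x = X \<union> Y"
  have "x \<in> X \<union> Y" using eq[symmetric] by (auto simp: principal_down_def)
  then show "principal_down x = X \<or> principal_down x = Y"
    using XY eq by (auto simp: down_sets_def is_down_set_def principal_down_def)
qed

lemma join_irreducible_down_imp_principal:
  fixes D :: "'a::{finite,order} set"
  assumes "join_irreducible_down D"
  obtains x where "D = principal_down x"
proof -
  have down: "is_down_set D" and ne: "D \<noteq> {}"
    and ji: "\<forall>X\<in>down_sets. \<forall>Y\<in>down_sets. D = X \<union> Y \<longrightarrow> D = X \<or> D = Y"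
    using assms by (auto simp: join_irreducible_down_def down_sets_def)
  obtain m where m: "m \<in> D" "\<forall>b\<in>D. m \<le> b \<longrightarrow> m = b"
    using finite_has_maximal[OF finite[of D] ne] by auto
  define Y where "Y = {d\<in>D. \<not> m \<le> d}"
  have "principal_down m \<in> down_sets"
    by (simp add: down_sets_def is_down_set_principal_down)
  moreover have "Y \<in> down_sets"
    using down by (auto simp: down_sets_def is_down_set_def Y_def dest: order_trans)
  moreover have "D = principal_down m \<union> Y"
    using down m by (auto simp: is_down_set_def principal_down_def Y_def)
  moreover have "D \<noteq> Y" using m by (auto simp: Y_def)
  ultimately have "D = principal_down m" using ji by blast
  then show thesis by (rule that)
qed

theorem mainTheorem11:
  fixes p :: "'q::{finite,order} \<Rightarrow> 'p::{finite,order}"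
  assumes "quotient_map_on UNIV (\<le>) UNIV (\<le>) p"
  shows "quotient_map_on down_sets (\<subseteq>) down_sets (\<subseteq>) (induced_map p)
    \<and> (\<forall>X\<in>down_sets. \<forall>Y\<in>down_sets. induced_map p (X \<union> Y) = induced_map p X \<union> induced_map p Y)
    \<and> (\<forall>D::'q set. join_irreducible_down D \<longrightarrow> join_irreducible_down (induced_map p D))
    \<and> (\<forall>x. induced_map p (principal_down x) = principal_down (p x))"
proof -
  have surj: "surj p" and mono: "mono p"
    using assms by (auto simp: quotient_map_on_def intro: monoI)
  have "join_irreducible_down (induced_map p D)" if "join_irreducible_down D" for D
    using that by (elim join_irreducible_down_imp_principal)
      (simp add: induced_map_principal_down[OF mono] join_irreducible_down_principal_down)
  then show ?thesis
    using quotient_map_on_induced_map[OF mono surj] induced_map_Un[OF mono]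
      induced_map_principal_down[OF mono]
    by blast
qed

end
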